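(* Let $g\ge1$, $n\ge3$, $k\in\{1,\dots,n\}$, and let $y\in A_g^n$ be a point at which $f_k$ attains its minimum on $A_g^n$. \begin{enumerate} \item If $k=n$, then $f_n(y)=g/t_{g,n}^2$ and $y=y(g,n,n)$. \item If $k=n-1$ and $(n,g)=(3,1)$, then $f_2(y)=1/9$ and $y=y(1,3,1)$. If $k=n-1$ and $(n,g)\ne(3,1)$, then $f_{n-1}(y)=\dfrac{g}{2t_{g,n-1}^2}$ and $y$ is one of $y(2,3,1)$, $y(1,4,2)$, $y(g,n,n-1)$. \item If $k=n-2$: if $n=4$ and $g\in\{1,2\}$, then $f_2(y)=1/(16g^2)$ and $y=y(g,4,1)$; if $(n,g)=(5,1)$, then $f_3(y)=1/128$ and $y=y(1,5,2)$; in all other cases $f_{n-2}(y)=\dfrac{g}{3t_{g,n-2}^2}$ and $y$ is $y(3,4,1)$ or $y(g,n,n-2)$. \end{enumerate}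
   Context: For $g,n\ge1$, $A_g^n\subseteq\mathbb{R}^n$ is the set of $(x_1,\dots,x_n)$ with $x_1\ge\dots\ge x_n\ge0$, $x_1+\dots+x_n=1/g$, and $x_1\cdots x_k\le g(x_{k+1}+\dots+x_n)$ for all $k=1,\dots,n-1$. $f_k(x)=x_1\cdots x_k$ on $A_g^n$. Sylvester sequences: $s_{g,1}=g+1$, $s_{g,k+1}=s_{g,k}(s_{g,k}-1)+1$, $t_{g,k}=s_{g,k}-1$. $y(g,n,k)=\big(\tfrac1{s_{g,1}},\dots,\tfrac1{s_{g,k-1}},\tfrac{1}{(n-k+1)t_{g,k}},\dots,\tfrac{1}{(n-k+1)t_{g,k}}\big)$ with the last entry repeated $n-k+1$ times. *)

theory Defs
  imports Complex_Main
begin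

text \<open>Points of R^n are represented as real lists of length n; entry x_i is xs ! (i-1).\<close>

definition A_set :: "nat \<Rightarrow> nat \<Rightarrow> real list set" where
  "A_set g n = {x. length x = n
      \<and> (\<forall>i j. i \<le> j \<and> j < n \<longrightarrow> x ! j \<le> x ! i)
      \<and> (\<forall>i<n. 0 \<le> x ! i)
      \<and> sum_list x = 1 / real g
      \<and> (\<forall>k. 1 \<le> k \<and> k \<le> n - 1 \<longrightarrow> prod_list (take k x) \<le> real g * sum_list (drop k x))}"

definition f_prod :: "nat \<Rightarrow> real list \<Rightarrow> real" where
  "f_prod k x = prod_list (take k x)"

text \<open>Sylvester sequence s_{g,k} for k >= 1 (the value at k = 0 is an unused dummy).\<close>
fun sylv :: "nat \<Rightarrow> nat \<Rightarrow> nat" where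
  "sylv g 0 = 0"
| "sylv g (Suc 0) = g + 1"
| "sylv g (Suc (Suc k)) = sylv g (Suc k) * (sylv g (Suc k) - 1) + 1"

definition tsylv :: "nat \<Rightarrow> nat \<Rightarrow> nat" where
  "tsylv g k = sylv g k - 1"

definition ypt :: "nat \<Rightarrow> nat \<Rightarrow> nat \<Rightarrow> real list" where
  "ypt g n k = map (\<lambda>i. 1 / real (sylv g i)) [1..<k]
      @ replicate (n - k + 1) (1 / (real (n - k + 1) * real (tsylv g k)))"

end

theory Submission
  imports Defs
begin

text \<open>A minimizer \<open>y\<close> of \<open>f_k\<close> on \<open>A\<^sub>g\<^sup>n\<close> has positive entries. For \<open>k \<ge> n - 2\<close>, perturbations that
  move mass between the ends of runs of equal entries while staying in \<open>A\<^sub>g\<^sup>n\<close> show that \<open>y\<close>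
  consists of a prefix on which the constraints are tight, followed by a single constant block; tight
  constraints force the prefix entries to be the Sylvester reciprocals \<open>1/s\<^sub>g\<^sub>,\<^sub>i\<close>, so
  \<open>y = y(g,n,J)\<close> for some \<open>J \<le> k\<close>. Then \<open>f_k(y(g,n,J)) = g / (t\<^sub>g\<^sub>,\<^sub>J ((n-J+1) t\<^sub>g\<^sub>,\<^sub>J)\<^bsup>k-J+1\<^esup>)\<close>,
  and this denominator increases strictly in \<open>J\<close> up to \<open>J = k - 1\<close>; the last step from \<open>k - 1\<close> to
  \<open>k\<close> goes up, stays level or goes down according as \<open>t\<^sub>g\<^sub>,\<^sub>k\<^sub>-\<^sub>1\<close> exceeds, equals or falls below
  \<open>n - k + 1\<close>, and the few small Sylvester numbers single out the exceptional pairs \<open>(n, g)\<close>.\<close>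

lemma prod_list_take_nth: "l \<le> length xs \<Longrightarrow> prod_list (take l xs) = (\<Prod>i<l. xs ! i)"
  by (simp add: prod.list_conv_set_nth atLeast0LessThan min_absorb1)

lemma sum_list_drop_nth: "sum_list (drop l xs) = (\<Sum>i\<in>{l..<length xs}. xs ! i)"
proof (cases "l \<le> length xs")
  case True
  have "sum_list (drop l xs) = (\<Sum>i\<in>{0..<length xs - l}. xs ! (i + l))"
    by (simp add: sum_list_sum_nth add.commute)
  also have "\<dots> = (\<Sum>i\<in>{l..<length xs}. xs ! i)"
    using sum.shift_bounds_nat_ivl[of "(!) xs" 0 l "length xs - l"] True by simp
  finally show ?thesis .
qed simp

lemma antitone_nth_iff:
  "(\<forall>i j. i \<le> j \<and> j < n \<longrightarrow> x ! j \<le> x ! i) \<longleftrightarrow> (\<forall>i. Suc i < n \<longrightarrow> x ! Suc i \<le> (x ! i :: real))"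
  using lift_Suc_antimono_le_ivl[of "{..<n - 1}" "(!) x"] by fastforce

lemma A_set_iff:
  "x \<in> A_set g n \<longleftrightarrow> length x = n \<and> (\<forall>i. Suc i < n \<longrightarrow> x ! Suc i \<le> x ! i)
     \<and> (\<forall>i<n. 0 \<le> x ! i) \<and> (\<Sum>i<n. x ! i) = 1 / real g
     \<and> (\<forall>l. 1 \<le> l \<and> l \<le> n - 1 \<longrightarrow> (\<Prod>i<l. x ! i) \<le> real g * (\<Sum>i\<in>{l..<n}. x ! i))"
proof -
  have sum: "sum_list x = (\<Sum>i<length x. x ! i)"
    by (simp add: sum_list_sum_nth atLeast0LessThan)
  have prod: "prod_list (take l x) = (\<Prod>i<l. x ! i)" if "l \<le> n - 1" "length x = n" for l
    using that by (intro prod_list_take_nth) simp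
  show ?thesis
    unfolding A_set_def mem_Collect_eq antitone_nth_iff using sum prod sum_list_drop_nth[of _ x] by auto
qed

lemma A_setD:
  assumes "x \<in> A_set g n"
  shows "length x = n" and "\<And>i j. i \<le> j \<Longrightarrow> j < n \<Longrightarrow> x ! j \<le> x ! i"
    and "\<And>i. i < n \<Longrightarrow> 0 \<le> x ! i" and "(\<Sum>i<n. x ! i) = 1 / real g"
    and "\<And>l. 1 \<le> l \<Longrightarrow> l \<le> n - 1 \<Longrightarrow> (\<Prod>i<l. x ! i) \<le> real g * (\<Sum>i\<in>{l..<n}. x ! i)"
  using assms unfolding A_set_iff antitone_nth_iff[symmetric] by auto

lemma f_prod_nth: "k \<le> length x \<Longrightarrow> f_prod k x = (\<Prod>i<k. x ! i)"
  unfolding f_prod_def by (rule prod_list_take_nth)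

lemma A_set_nth_pos:
  assumes x: "x \<in> A_set g n" and "g \<ge> 1" and "i < n"
  shows "0 < x ! i"
proof (rule ccontr)
  assume "\<not> 0 < x ! i"
  then obtain m where m: "m < n" "x ! m = 0" and below: "\<And>j. j < m \<Longrightarrow> 0 < x ! j"
    using exists_least_iff[of "\<lambda>j. j < n \<and> \<not> 0 < x ! j"] A_setD(3)[OF x] \<open>i < n\<close>
    by (metis order.strict_trans order_le_less)
  have tail: "(\<Sum>j\<in>{m..<n}. x ! j) = 0"
    using A_setD(2,3)[OF x] m by (intro sum.neutral) (metis atLeastLessThan_iff order.antisym)
  show False
  proof (cases "m = 0")
    case True
    then show False using tail A_setD(4)[OF x] \<open>g \<ge> 1\<close> by (simp add: atLeast0LessThan)
  next
    case False
    have "0 < (\<Prod>j<m. x ! j)" using below by (intro prod_pos) simp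
    moreover have "m \<le> n - 1" using m by simp
    ultimately show False using A_setD(5)[OF x, of m] tail False by simp
  qed
qed

lemma A_set_first_le:
  assumes x: "x \<in> A_set g n" and "g \<ge> 1" and "n \<ge> 2"
  shows "x ! 0 \<le> 1 / (real g + 1)"
proof -
  have "(\<Sum>i<n. x ! i) = x ! 0 + (\<Sum>i\<in>{1..<n}. x ! i)"
    using \<open>n \<ge> 2\<close> by (simp add: atLeast0LessThan[symmetric] sum.atLeast_Suc_lessThan)
  then have "x ! 0 \<le> real g * (1 / real g - x ! 0)"
    using A_setD(4)[OF x] A_setD(5)[OF x, of 1] \<open>n \<ge> 2\<close> by simp
  then have "x ! 0 * (real g + 1) \<le> 1" using \<open>g \<ge> 1\<close> by (simp add: algebra_simps)
  then show ?thesis using \<open>g \<ge> 1\<close> by (simp add: field_simps)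
qed

section \<open>Sylvester sequences\<close>

lemma sylv_Suc_ge: "sylv g (Suc i) \<ge> g + 1"
proof (induction i)
  case (Suc i)
  then show ?case by (cases "sylv g (Suc i)") auto
qed simp

lemma tsylv_1 [simp]: "tsylv g (Suc 0) = g"
  by (simp add: tsylv_def)

lemma sylv_eq_tsylv_plus_1: "real (sylv g (Suc i)) = real (tsylv g (Suc i)) + 1"
  using sylv_Suc_ge[of g i] by (simp add: tsylv_def of_nat_diff)

lemma tsylv_Suc_Suc: "real (tsylv g (Suc (Suc i))) = real (tsylv g (Suc i)) * (real (tsylv g (Suc i)) + 1)"
proof -
  have "real (tsylv g (Suc (Suc i))) = real (sylv g (Suc i)) * real (tsylv g (Suc i))"
    by (simp add: tsylv_def)
  then show ?thesis using sylv_eq_tsylv_plus_1[of g i] by (simp add: mult.commute)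
qed

lemma tsylv_2: "real (tsylv g 2) = real g * (real g + 1)"
  using tsylv_Suc_Suc[of g 0] by (simp add: numeral_2_eq_2 tsylv_def)

lemma tsylv_ge_1: "g \<ge> 1 \<Longrightarrow> i \<ge> 1 \<Longrightarrow> real (tsylv g i) \<ge> 1"
  using sylv_Suc_ge[of g "i - 1"] by (cases i) (auto simp: tsylv_def)

lemma tsylv_pos: "g \<ge> 1 \<Longrightarrow> i \<ge> 1 \<Longrightarrow> real (tsylv g i) > 0"
  using tsylv_ge_1[of g i] by linarith

lemma tsylv_mono:
  assumes "g \<ge> 1" "1 \<le> i" "i \<le> j"
  shows "real (tsylv g i) \<le> real (tsylv g j)"
  using \<open>i \<le> j\<close>
proof (induction j rule: dec_induct)
  case (step j)
  then obtain j' where j: "j = Suc j'" using assms(2) by (cases j) auto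
  have "real (tsylv g j) * 1 \<le> real (tsylv g j) * (real (tsylv g j) + 1)"
    using tsylv_ge_1[of g j] assms step by (intro mult_left_mono) auto
  then show ?case using step.IH tsylv_Suc_Suc[of g j'] j by simp
qed simp

lemma tsylv_ge_2: "g \<ge> 1 \<Longrightarrow> i \<ge> 2 \<Longrightarrow> real (tsylv g i) \<ge> 2"
  using tsylv_2[of g] tsylv_mono[of g 2 i] mult_mono[of 1 "real g" 2 "real g + 1"] by simp

lemma tsylv_ge_6: "g \<ge> 1 \<Longrightarrow> i \<ge> 3 \<Longrightarrow> real (tsylv g i) \<ge> 6"
  using tsylv_Suc_Suc[of g 1] tsylv_ge_2[of g 2] tsylv_mono[of g 3 i]
    mult_mono[of 2 "real (tsylv g 2)" 3 "real (tsylv g 2) + 1"]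
  by (simp add: numeral_3_eq_3 numeral_2_eq_2)

lemma tsylv_eq_1_iff:
  assumes "g \<ge> 1" "i \<ge> 1"
  shows "tsylv g i = 1 \<longleftrightarrow> i = 1 \<and> g = 1"
  using tsylv_ge_2[of g i] assms by (cases "i = 1") auto

lemma tsylv_eq_2_iff:
  assumes "g \<ge> 1" "i \<ge> 1"
  shows "tsylv g i = 2 \<longleftrightarrow> (i = 1 \<and> g = 2) \<or> (i = 2 \<and> g = 1)"
proof -
  have "real g * (real g + 1) \<noteq> 2" if "g \<noteq> 1"
    using that assms mult_mono[of 2 "real g" 3 "real g + 1"] by auto
  moreover have "i = 1 \<or> i = 2 \<or> i \<ge> 3" using assms by linarith
  ultimately show ?thesis
    using tsylv_ge_6[OF assms(1), of i] tsylv_2[of g] by auto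
qed

lemma tsylv_eq_3_iff:
  assumes "g \<ge> 1" "i \<ge> 1"
  shows "tsylv g i = 3 \<longleftrightarrow> i = 1 \<and> g = 3"
proof -
  have "real g * (real g + 1) \<noteq> 3" using assms mult_mono[of 2 "real g" 3 "real g + 1"]
    by (cases "g = 1") auto
  moreover have "i = 1 \<or> i = 2 \<or> i \<ge> 3" using assms by linarith
  ultimately show ?thesis
    using tsylv_ge_6[OF assms(1), of i] tsylv_2[of g] by auto
qed

lemma tsylv_le_2_iff:
  assumes "g \<ge> 1" "i \<ge> 1"
  shows "tsylv g i \<le> 2 \<longleftrightarrow> (i = 1 \<and> g \<le> 2) \<or> (i = 2 \<and> g = 1)"
proof -
  have "tsylv g i \<le> 2 \<longleftrightarrow> tsylv g i = 1 \<or> tsylv g i = 2"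
    using tsylv_ge_1[OF assms] by linarith
  then show ?thesis using tsylv_eq_1_iff[OF assms] tsylv_eq_2_iff[OF assms] assms by auto
qed

lemma prod_inv_sylv:
  assumes "g \<ge> 1"
  shows "(\<Prod>i<m. 1 / real (sylv g (Suc i))) = real g / real (tsylv g (Suc m))"
proof (induction m)
  case (Suc m)
  have "real g / real (tsylv g (Suc m)) * (1 / (real (tsylv g (Suc m)) + 1))
      = real g / real (tsylv g (Suc (Suc m)))"
    using tsylv_Suc_Suc[of g m] by simp
  then show ?case using Suc.IH sylv_eq_tsylv_plus_1[of g m] by simp
qed (use assms in simp)

lemma sum_inv_sylv:
  assumes "g \<ge> 1" "l \<le> m"
  shows "(\<Sum>i\<in>{l..<m}. 1 / real (sylv g (Suc i)))
    = 1 / real (tsylv g (Suc l)) - 1 / real (tsylv g (Suc m))"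
  using \<open>l \<le> m\<close>
proof (induction m rule: dec_induct)
  case (step m)
  have "1 / (real (tsylv g (Suc m)) + 1) - 1 / real (tsylv g (Suc m))
      = - 1 / real (tsylv g (Suc (Suc m)))"
    using tsylv_pos[OF assms(1), of "Suc m"] tsylv_Suc_Suc[of g m] by (simp add: field_simps)
  then show ?case using step.IH step.hyps sylv_eq_tsylv_plus_1[of g m] by simp
qed simp

section \<open>The candidate points \<open>y(g,n,J)\<close>\<close>

lemma length_ypt: "1 \<le> J \<Longrightarrow> J \<le> n \<Longrightarrow> length (ypt g n J) = n"
  by (simp add: ypt_def)

lemma nth_ypt_head: "i < J - 1 \<Longrightarrow> ypt g n J ! i = 1 / real (sylv g (Suc i))"
  by (simp add: ypt_def nth_append)

definition ytail :: "nat \<Rightarrow> nat \<Rightarrow> nat \<Rightarrow> real" where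
  "ytail g n J = 1 / (real (n - J + 1) * real (tsylv g J))"

lemma ytail_pos: "g \<ge> 1 \<Longrightarrow> 1 \<le> J \<Longrightarrow> 0 < ytail g n J"
  unfolding ytail_def using tsylv_pos[of g J] by simp

lemma ytail_le: "g \<ge> 1 \<Longrightarrow> 1 \<le> J \<Longrightarrow> ytail g n J \<le> 1 / real (tsylv g J)"
  unfolding ytail_def using tsylv_pos[of g J] by (simp add: frac_le)

lemma sum_ytail: "g \<ge> 1 \<Longrightarrow> 1 \<le> J \<Longrightarrow> real (n - J + 1) * ytail g n J = 1 / real (tsylv g J)"
  unfolding ytail_def using tsylv_pos[of g J] by simp

lemma nth_ypt_tail: "1 \<le> J \<Longrightarrow> J - 1 \<le> i \<Longrightarrow> i < n \<Longrightarrow> ypt g n J ! i = ytail g n J"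
  unfolding ypt_def ytail_def by (simp add: nth_append del: replicate.simps)

lemma prod_ypt_head:
  assumes "g \<ge> 1" "l \<le> J - 1"
  shows "(\<Prod>i<l. ypt g n J ! i) = real g / real (tsylv g (Suc l))"
  using prod_inv_sylv[OF assms(1), of l] assms by (simp add: nth_ypt_head)

lemma sum_ypt_from:
  assumes "g \<ge> 1" "1 \<le> J" "J \<le> n" "l \<le> J - 1"
  shows "(\<Sum>i\<in>{l..<n}. ypt g n J ! i) = 1 / real (tsylv g (Suc l))"
proof -
  have "(\<Sum>i\<in>{l..<J - 1}. ypt g n J ! i) = 1 / real (tsylv g (Suc l)) - 1 / real (tsylv g J)"
    using sum_inv_sylv[OF assms(1), of l "J - 1"] assms by (simp add: nth_ypt_head)
  moreover have "(\<Sum>i\<in>{J - 1..<n}. ypt g n J ! i) = real (n - J + 1) * ytail g n J"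
    using assms by (simp add: nth_ypt_tail)
  ultimately show ?thesis
    using sum.atLeastLessThan_concat[of l "J - 1" n "(!) (ypt g n J)"] sum_ytail[of g J n] assms
    by simp
qed

lemma prod_ypt:
  assumes "g \<ge> 1" "1 \<le> J" "J \<le> l" "l \<le> n"
  shows "(\<Prod>i<l. ypt g n J ! i) = real g / real (tsylv g J) * ytail g n J ^ (l - J + 1)"
proof -
  have "(\<Prod>i<l. ypt g n J ! i) = (\<Prod>i<J - 1. ypt g n J ! i) * (\<Prod>i\<in>{J - 1..<l}. ypt g n J ! i)"
    using prod.atLeastLessThan_concat[of 0 "J - 1" l "(!) (ypt g n J)"] assms
    by (simp add: atLeast0LessThan)
  moreover have "(\<Prod>i\<in>{J - 1..<l}. ypt g n J ! i) = ytail g n J ^ (l - J + 1)"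
    using assms by (simp add: nth_ypt_tail Suc_diff_le)
  ultimately show ?thesis
    using prod_ypt_head[OF assms(1), of "J - 1" J n] assms by simp
qed

lemma ypt_in_A_set:
  assumes g: "g \<ge> 1" and J: "1 \<le> J" "J \<le> n"
  shows "ypt g n J \<in> A_set g n"
proof -
  let ?y = "ypt g n J" and ?c = "ytail g n J"
  have TJ: "real (tsylv g J) \<ge> 1" using tsylv_ge_1 g J by auto
  have c_pos: "0 < ?c" and c_le: "?c \<le> 1 / real (tsylv g J)"
    using ytail_pos ytail_le g J by auto
  have ord: "?y ! Suc i \<le> ?y ! i" if i: "Suc i < n" for i
  proof -
    consider "Suc i < J - 1" | "Suc i = J - 1" | "J - 1 \<le> i" by linarith
    then show ?thesis
    proof cases
      case 1
      have "1 / real (sylv g (Suc (Suc i))) \<le> 1 / real (sylv g (Suc i))"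
        unfolding sylv_eq_tsylv_plus_1
        using tsylv_mono[OF g, of "Suc i" "Suc (Suc i)"] tsylv_ge_1[OF g, of "Suc i"]
        by (simp add: frac_le)
      then show ?thesis using 1 by (simp add: nth_ypt_head del: sylv.simps)
    next
      case 2
      then have "real (tsylv g J) = real (tsylv g (Suc i)) * (real (tsylv g (Suc i)) + 1)"
        using tsylv_Suc_Suc[of g i] by (simp add: numeral_2_eq_2)
      then have "1 / real (tsylv g J) \<le> 1 / (real (tsylv g (Suc i)) + 1)"
        using tsylv_ge_1[OF g, of "Suc i"] by (simp add: frac_le)
      then show ?thesis
        using 2 i J c_le sylv_eq_tsylv_plus_1[of g i]
        by (simp add: nth_ypt_head nth_ypt_tail del: sylv.simps)
    next
      case 3
      then show ?thesis using i J by (simp add: nth_ypt_tail)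
    qed
  qed
  have nonneg: "0 \<le> ?y ! i" if "i < n" for i
    using that J c_pos by (cases "i < J - 1") (auto simp: nth_ypt_head nth_ypt_tail)
  have constraint: "(\<Prod>i<l. ?y ! i) \<le> real g * (\<Sum>i\<in>{l..<n}. ?y ! i)"
    if l: "1 \<le> l" "l \<le> n - 1" for l
  proof (cases "l \<le> J - 1")
    case True
    then show ?thesis using prod_ypt_head[OF g True] sum_ypt_from[OF g J True] by simp
  next
    case False
    have "?c \<le> 1" using c_le TJ by (smt (verit) divide_le_eq_1)
    then have "?c ^ (l - J) * ?c \<le> 1 * ?c"
      using c_pos by (intro mult_right_mono power_le_one) auto
    then have "real g / real (tsylv g J) * ?c ^ (l - J + 1) \<le> real g * ?c"
      using TJ g c_pos mult_mono[of "real g / real (tsylv g J)" "real g" "?c ^ (l - J + 1)" ?c]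
      by (simp add: divide_le_eq mult_le_cancel_left1)
    then have "(\<Prod>i<l. ?y ! i) \<le> real g * ?c"
      using prod_ypt[OF g J(1), of l n] False l by simp
    also have "\<dots> \<le> real g * (real (n - l) * ?c)"
      using l c_pos by (intro mult_left_mono) auto
    also have "real (n - l) * ?c = (\<Sum>i\<in>{l..<n}. ?y ! i)"
      using False J by (simp add: nth_ypt_tail)
    finally show ?thesis .
  qed
  have "(\<Sum>i<n. ?y ! i) = 1 / real g"
    using sum_ypt_from[OF g J, of 0] by (simp add: atLeast0LessThan)
  then show ?thesis
    unfolding A_set_iff using ord nonneg constraint length_ypt J by auto
qed

definition ydenom :: "nat \<Rightarrow> nat \<Rightarrow> nat \<Rightarrow> nat \<Rightarrow> real" where
  "ydenom g n k J = real (tsylv g J) * (real (n - J + 1) * real (tsylv g J)) ^ (k - J + 1)"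

lemma f_prod_ypt:
  assumes "g \<ge> 1" "1 \<le> J" "J \<le> k" "k \<le> n"
  shows "f_prod k (ypt g n J) = real g / ydenom g n k J"
  using prod_ypt[OF assms] assms
  by (simp add: f_prod_nth length_ypt ydenom_def ytail_def power_one_over)

lemma ydenom_pos: "g \<ge> 1 \<Longrightarrow> 1 \<le> J \<Longrightarrow> ydenom g n k J > 0"
  unfolding ydenom_def using tsylv_pos[of g J] by simp

lemma ydenom_diag: "ydenom g n k k = real (n - k + 1) * real (tsylv g k) ^ 2"
  unfolding ydenom_def by (simp add: power2_eq_square)

section \<open>Comparing the candidate points\<close>

lemma ydenom_Suc:
  assumes "g \<ge> 1" "1 \<le> J" "J + 1 \<le> k" "k \<le> n"
  defines "T \<equiv> real (tsylv g J)" and "m \<equiv> real (n - J + 1)" and "r \<equiv> k - J + 1"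
  shows "ydenom g n k J = (m ^ r * T) * T ^ r"
    and "ydenom g n k (J + 1) = ((m - 1) ^ (r - 1) * (T + 1) ^ r) * T ^ r"
proof -
  obtain J' where J': "J = Suc J'" using assms(2) by (cases J) auto
  have r: "r = Suc (Suc (k - (J + 1)))" unfolding r_def using assms(3) by simp
  show "ydenom g n k J = (m ^ r * T) * T ^ r"
    unfolding ydenom_def T_def m_def r_def by (simp only: power_mult_distrib mult_ac)
  have "real (tsylv g (J + 1)) = T * (T + 1)" unfolding T_def using tsylv_Suc_Suc[of g J'] J' by simp
  moreover have "real (n - (J + 1) + 1) = m - 1" "k - (J + 1) + 1 = r - 1"
    unfolding m_def r_def using assms(3,4) by (auto simp: of_nat_diff)
  ultimately have "ydenom g n k (J + 1) = T * (T + 1) * ((m - 1) * (T * (T + 1))) ^ (r - 1)"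
    unfolding ydenom_def by (simp only:)
  also have "\<dots> = ((m - 1) ^ (r - 1) * (T + 1) ^ r) * T ^ r"
    unfolding r by (simp only: power_mult_distrib mult_ac power_Suc diff_Suc_1)
  finally show "ydenom g n k (J + 1) = ((m - 1) ^ (r - 1) * (T + 1) ^ r) * T ^ r" .
qed

lemma two_pow_mult_le_pow:
  fixes T :: real
  assumes "T \<ge> 1" "p \<ge> 2"
  shows "2 ^ p * T \<le> (T + 1) ^ p"
  using assms(2)
proof (induction p rule: dec_induct)
  case base
  have "0 \<le> (T - 1) ^ 2" by simp
  also have "\<dots> = (T + 1) ^ 2 - 2 ^ 2 * T" by (simp add: power2_eq_square algebra_simps)
  finally show ?case by simp
next
  case (step p)
  then show ?case using assms(1) mult_mono[of 2 "T + 1" "2 ^ p * T" "(T + 1) ^ p"] by simp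
qed

lemma pow_less_two_pow_mult:
  fixes c m :: real
  assumes "c * m \<le> 2 * (m - 1)" "m - 1 < c ^ r" "0 < c" "1 < m" "1 \<le> r"
  shows "m ^ r < 2 ^ r * (m - 1) ^ (r - 1)"
proof -
  have "(m - 1) * m ^ r < c ^ r * m ^ r" using assms(2,4) by simp
  also have "\<dots> \<le> (2 * (m - 1)) ^ r"
    unfolding power_mult_distrib[symmetric] using assms by (intro power_mono) auto
  also have "\<dots> = 2 ^ r * (m - 1) ^ r" by (rule power_mult_distrib)
  also have "(m - 1) ^ r = (m - 1) * (m - 1) ^ (r - 1)"
    using assms(5) by (cases r) simp_all
  finally show ?thesis using assms(4) by simp
qed

lemma three_halves_pow_gt: "p \<ge> 3 \<Longrightarrow> real p < (3 / 2) ^ p"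
proof (induction p rule: dec_induct)
  case (step p)
  then show ?case by simp
qed (simp add: numeral_3_eq_3)

lemma eight_fifths_pow_gt: "q \<ge> 3 \<Longrightarrow> real q + 1 < (8 / 5) ^ q"
proof (induction q rule: dec_induct)
  case (step q)
  then show ?case by simp
qed (simp add: numeral_3_eq_3)

lemma ydenom_less_Suc:
  assumes g: "g \<ge> 1" and J: "1 \<le> J" "J + 2 \<le> k" and k: "k < n" "n \<le> k + 2"
  shows "ydenom g n k J < ydenom g n k (J + 1)"
proof -
  define T where "T = real (tsylv g J)"
  define m where "m = real (n - J + 1)"
  define r where "r = k - J + 1"
  have T: "T \<ge> 1" unfolding T_def using tsylv_ge_1 g J by simp
  have r: "r \<ge> 3" unfolding r_def using J by simp
  have "m ^ r < 2 ^ r * (m - 1) ^ (r - 1)"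
  proof (cases "n = k + 1")
    case True
    then have "m = real r + 1" unfolding m_def r_def using J by simp
    then show ?thesis
      using pow_less_two_pow_mult[of "3 / 2" m r] three_halves_pow_gt[OF r] r by simp
  next
    case False
    then have "m = real r + 2" unfolding m_def r_def using J k by simp
    then show ?thesis
      using pow_less_two_pow_mult[of "8 / 5" m r] eight_fifths_pow_gt[OF r] r by simp
  qed
  then have "m ^ r * T < 2 ^ r * (m - 1) ^ (r - 1) * T" using T by simp
  also have "\<dots> \<le> (m - 1) ^ (r - 1) * (T + 1) ^ r"
    using two_pow_mult_le_pow[OF T, of r] r mult_left_mono[of "2 ^ r * T" "(T + 1) ^ r" "(m - 1) ^ (r - 1)"]
    unfolding m_def using J by (simp add: mult_ac)
  finally show ?thesis
    using ydenom_Suc[OF g J(1) _ less_imp_le[OF k(1)]] J T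
    unfolding T_def m_def r_def by simp
qed

lemma ydenom_last_step:
  assumes g: "g \<ge> 1" and k: "2 \<le> k" "k \<le> n"
  shows "ydenom g n k (k - 1) < ydenom g n k k \<longleftrightarrow> n - k + 1 < tsylv g (k - 1)"
    and "ydenom g n k (k - 1) = ydenom g n k k \<longleftrightarrow> tsylv g (k - 1) = n - k + 1"
proof -
  define T where "T = real (tsylv g (k - 1))"
  define d where "d = real (n - k + 1)"
  have T: "T \<ge> 1" and d: "d \<ge> 1" unfolding T_def d_def using tsylv_ge_1 g k by auto
  have e: "k - 1 + 1 = k" "real (n - (k - 1) + 1) = d + 1" "k - (k - 1) + 1 = 2"
    unfolding d_def using k by auto
  have D: "ydenom g n k (k - 1) = ((d + 1) ^ 2 * T) * T ^ 2"
    "ydenom g n k k = (d * (T + 1) ^ 2) * T ^ 2"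
    using ydenom_Suc[OF g, of "k - 1" k n] k unfolding e T_def by auto
  have factor: "d * (T + 1) ^ 2 - (d + 1) ^ 2 * T = (d * T - 1) * (T - d)"
    by (simp add: power2_eq_square algebra_simps)
  have "T ^ 2 > 0" using T by simp
  then have less: "ydenom g n k (k - 1) < ydenom g n k k \<longleftrightarrow> 0 < (d * T - 1) * (T - d)"
    and eq: "ydenom g n k (k - 1) = ydenom g n k k \<longleftrightarrow> (d * T - 1) * (T - d) = 0"
    unfolding D factor[symmetric] by auto
  have "d \<le> d * T" "T \<le> d * T" using T d by simp_all
  then have "0 < d * T - 1 \<or> d = 1 \<and> T = 1" using T d by linarith
  then consider "0 < d * T - 1" | "d = 1" "T = 1" by blast
  then have "0 < (d * T - 1) * (T - d) \<longleftrightarrow> d < T" and "(d * T - 1) * (T - d) = 0 \<longleftrightarrow> T = d"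
    by (cases; simp add: zero_less_mult_iff)+
  then show "ydenom g n k (k - 1) < ydenom g n k k \<longleftrightarrow> n - k + 1 < tsylv g (k - 1)"
    and "ydenom g n k (k - 1) = ydenom g n k k \<longleftrightarrow> tsylv g (k - 1) = n - k + 1"
    unfolding less eq T_def d_def by linarith+
qed

lemma argmax_after_strict_increase:
  fixes D :: "nat \<Rightarrow> real"
  assumes inc: "\<And>J. 1 \<le> J \<Longrightarrow> Suc J < M \<Longrightarrow> D J < D (Suc J)"
    and J0: "1 \<le> J0" "J0 \<le> M" and max: "\<And>J. 1 \<le> J \<Longrightarrow> J \<le> M \<Longrightarrow> D J \<le> D J0"
    and M: "2 \<le> M"
  shows "J0 = M - 1 \<and> D M \<le> D (M - 1) \<or> J0 = M \<and> D (M - 1) \<le> D M"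
proof -
  have M1: "1 \<le> M - 1" using M by simp
  have "\<not> J0 < M - 1"
  proof
    assume "J0 < M - 1"
    have "D J0 < D b" if "Suc J0 \<le> b" "b \<le> M - 1" for b
      using that
    proof (induction b rule: dec_induct)
      case base
      then show ?case using inc[of J0] J0 by simp
    next
      case (step b)
      then have "Suc b < M" by linarith
      then show ?case using step inc[of b] J0 by simp
    qed
    then have "D J0 < D (M - 1)" using \<open>J0 < M - 1\<close> by simp
    then show False using max[of "M - 1"] M1 by simp
  qed
  then have "J0 = M - 1 \<or> J0 = M" using J0 by linarith
  then show ?thesis using max[of M] max[of "M - 1"] M1 by auto
qed

section \<open>Tight constraints\<close>

definition tight :: "real list \<Rightarrow> nat \<Rightarrow> nat \<Rightarrow> nat \<Rightarrow> bool" where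
  "tight y g n l \<longleftrightarrow> (\<Prod>i<l. y ! i) = real g * (\<Sum>i\<in>{l..<n}. y ! i)"

lemma slack_if_not_tight:
  "y \<in> A_set g n \<Longrightarrow> 1 \<le> l \<Longrightarrow> l \<le> n - 1 \<Longrightarrow> \<not> tight y g n l \<Longrightarrow>
    (\<Prod>i<l. y ! i) < real g * (\<Sum>i\<in>{l..<n}. y ! i)"
  using A_setD(5)[of y g n l] unfolding tight_def by linarith

text \<open>If \<open>y\<^sub>l\<^sub>-\<^sub>1 = y\<^sub>l = a\<close>, tightness at \<open>l\<close> together with constraint \<open>l - 1\<close> forces \<open>a \<ge> 1/2\<close>;
  but then two entries \<open>1/2\<close> and a third positive one exceed the total mass \<open>1/g \<le> 1\<close>.\<close>

lemma tight_imp_descent: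
  assumes y: "y \<in> A_set g n" and g: "g \<ge> 1" and n: "n \<ge> 3" and l: "1 \<le> l" "l \<le> n - 1"
    and tight: "tight y g n l"
  shows "y ! l < y ! (l - 1)"
proof (rule ccontr)
  assume "\<not> y ! l < y ! (l - 1)"
  then have eq: "y ! l = y ! (l - 1)" using A_setD(2)[OF y, of "l - 1" l] l by force
  define a where "a = y ! (l - 1)"
  define R where "R = (\<Sum>i\<in>{l..<n}. y ! i)"
  define P where "P = (\<Prod>i<l - 1. y ! i)"
  have pos: "0 < y ! i" if "i < n" for i using A_set_nth_pos[OF y g that] .
  have a: "0 < a" "a \<le> 1 / 2"
  proof -
    show "0 < a" unfolding a_def using pos l by simp
    have "a \<le> y ! 0" unfolding a_def using A_setD(2)[OF y, of 0 "l - 1"] l by simp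
    also have "\<dots> \<le> 1 / (real g + 1)" using A_set_first_le[OF y g] n by simp
    also have "\<dots> \<le> 1 / 2" using g by (simp add: divide_simps)
    finally show "a \<le> 1 / 2" .
  qed
  have sum_from_pred: "(\<Sum>i\<in>{l - 1..<n}. y ! i) = a + R"
    unfolding a_def R_def using l by (simp add: sum.atLeast_Suc_lessThan)
  have "P \<le> real g * (a + R)"
  proof (cases "l = 1")
    case True
    then have "a + R = 1 / real g" using sum_from_pred A_setD(4)[OF y] by (simp add: atLeast0LessThan)
    then show ?thesis using True g by (simp add: P_def)
  next
    case False
    then show ?thesis using A_setD(5)[OF y, of "l - 1"] l sum_from_pred by (simp add: P_def)
  qed
  moreover have "P * a = real g * R"
    using tight l unfolding tight_def P_def a_def R_def by (cases l) simp_all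
  ultimately have "real g * R \<le> real g * ((a + R) * a)"
    using mult_right_mono[of P "real g * (a + R)" a] a by (simp add: mult.assoc)
  then have R_le: "R \<le> (a + R) * a" using g by simp
  have "a \<le> R"
    using eq l n A_setD(3)[OF y] sum_nonneg[of "{Suc l..<n}" "(!) y"]
    unfolding a_def R_def by (simp add: sum.atLeast_Suc_lessThan)
  then have "a * (1 - a) \<le> R * (1 - a)" using a by (intro mult_right_mono) auto
  also have "\<dots> \<le> a * a" using R_le by (simp add: algebra_simps)
  finally have "a * (1 - a) \<le> a * a" .
  then have "1 - a \<le> a" using a mult_le_cancel_left_pos[of a "1 - a" a] by simp
  then have half: "a = 1 / 2" using a by simp
  obtain j where j: "j < n" "j \<noteq> l" "j \<noteq> l - 1"
  proof (cases "l = 1")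
    case True
    then show ?thesis using that[of 2] n by auto
  next
    case False
    then show ?thesis using that[of 0] l by auto
  qed
  have "y ! l + y ! (l - 1) + y ! j = (\<Sum>i\<in>{l, l - 1, j}. y ! i)" using j l by simp
  also have "\<dots> \<le> (\<Sum>i<n. y ! i)"
    using l j A_setD(3)[OF y] by (intro sum_mono2) auto
  finally have "1 < (\<Sum>i<n. y ! i)" using eq half pos[OF j(1)] unfolding a_def by simp
  then show False using A_setD(4)[OF y] g by (simp add: divide_simps)
qed

lemma tight_prefix_sylv:
  assumes y: "y \<in> A_set g n" and g: "g \<ge> 1" and J: "J \<le> n"
    and tight: "\<And>l. 1 \<le> l \<Longrightarrow> l < J \<Longrightarrow> tight y g n l"
    and l: "l \<le> J - 1"
  shows "(\<Prod>i<l. y ! i) = real g / real (tsylv g (Suc l))"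
    and "(\<Sum>i\<in>{l..<n}. y ! i) = 1 / real (tsylv g (Suc l))"
    and "\<And>i. i < l \<Longrightarrow> y ! i = 1 / real (sylv g (Suc i))"
proof -
  have "(\<Prod>i<l. y ! i) = real g / real (tsylv g (Suc l))
      \<and> (\<Sum>i\<in>{l..<n}. y ! i) = 1 / real (tsylv g (Suc l))
      \<and> (\<forall>i<l. y ! i = 1 / real (sylv g (Suc i)))"
    using l
  proof (induction l)
    case 0
    then show ?case using A_setD(4)[OF y] g by (simp add: atLeast0LessThan)
  next
    case (Suc l)
    define T where "T = real (tsylv g (Suc l))"
    have T: "T > 0" using tsylv_pos g T_def by auto
    have IH: "(\<Prod>i<l. y ! i) = real g / T" "(\<Sum>i\<in>{l..<n}. y ! i) = 1 / T"
      "\<forall>i<l. y ! i = 1 / real (sylv g (Suc i))"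
      using Suc T_def by auto
    have "l < n" using Suc J by auto
    then have rest: "(\<Sum>i\<in>{Suc l..<n}. y ! i) = 1 / T - y ! l"
      using IH(2) by (simp add: sum.atLeast_Suc_lessThan)
    have "real g / T * y ! l = real g * (1 / T - y ! l)"
      using tight[of "Suc l"] Suc.prems IH(1) rest unfolding tight_def by simp
    then have "real g * (y ! l / T) = real g * (1 / T - y ! l)" by simp
    moreover have "real g \<noteq> 0" using g by simp
    ultimately have "y ! l / T = 1 / T - y ! l" by (metis mult_left_cancel)
    then have yl: "y ! l = 1 / (T + 1)" using T by (simp add: field_simps)
    have T_Suc: "real (tsylv g (Suc (Suc l))) = T * (T + 1)" using tsylv_Suc_Suc T_def by simp
    have "(\<Prod>i<Suc l. y ! i) = real g / real (tsylv g (Suc (Suc l)))"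
      using IH(1) yl T_Suc by simp
    moreover have "(\<Sum>i\<in>{Suc l..<n}. y ! i) = 1 / real (tsylv g (Suc (Suc l)))"
      using rest yl T_Suc T by (simp add: field_simps)
    moreover have "\<forall>i<Suc l. y ! i = 1 / real (sylv g (Suc i))"
      using IH(3) yl sylv_eq_tsylv_plus_1[of g l] less_Suc_eq T_def by auto
    ultimately show ?case by blast
  qed
  then show "(\<Prod>i<l. y ! i) = real g / real (tsylv g (Suc l))"
    and "(\<Sum>i\<in>{l..<n}. y ! i) = 1 / real (tsylv g (Suc l))"
    and "\<And>i. i < l \<Longrightarrow> y ! i = 1 / real (sylv g (Suc i))"
    by auto
qed

lemma eq_ypt_if_tight_prefix:
  assumes y: "y \<in> A_set g n" and g: "g \<ge> 1" and J: "1 \<le> J" "J \<le> n"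
    and tight: "\<And>l. 1 \<le> l \<Longrightarrow> l < J \<Longrightarrow> tight y g n l"
    and const: "\<And>i. J - 1 \<le> i \<Longrightarrow> i < n \<Longrightarrow> y ! i = y ! (J - 1)"
  shows "y = ypt g n J"
proof (rule nth_equalityI)
  show "length y = length (ypt g n J)" using A_setD(1)[OF y] length_ypt J by simp
  have "(\<Sum>i\<in>{J - 1..<n}. y ! i) = (\<Sum>i\<in>{J - 1..<n}. y ! (J - 1))"
    by (intro sum.cong refl) (meson atLeastLessThan_iff const)
  then have "real (n - J + 1) * y ! (J - 1) = (\<Sum>i\<in>{J - 1..<n}. y ! i)"
    using J by simp
  also have "\<dots> = real (n - J + 1) * ytail g n J"
    using tight_prefix_sylv(2)[OF y g J(2) tight, of "J - 1"] sum_ytail[OF g J(1), where n = n] J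
    by simp
  finally have tail: "y ! (J - 1) = ytail g n J" by simp
  fix i assume "i < length y"
  then have "i < n" using A_setD(1)[OF y] by simp
  show "y ! i = ypt g n J ! i"
  proof (cases "i < J - 1")
    case True
    then show ?thesis using tight_prefix_sylv(3)[OF y g J(2) tight, of "J - 1" i] by (simp add: nth_ypt_head)
  next
    case False
    then show ?thesis using const[of i] tail J \<open>i < n\<close> by (simp add: nth_ypt_tail)
  qed
qed

section \<open>Perturbations\<close>

definition perturb :: "real list \<Rightarrow> (nat \<Rightarrow> real) \<Rightarrow> real \<Rightarrow> real list" where
  "perturb y v e = map (\<lambda>i. y ! i + e * v i) [0..<length y]"

lemma length_perturb [simp]: "length (perturb y v e) = length y"
  by (simp add: perturb_def)

lemma nth_perturb [simp]: "i < length y \<Longrightarrow> perturb y v e ! i = y ! i + e * v i"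
  by (simp add: perturb_def)

lemma f_prod_perturb: "k \<le> length y \<Longrightarrow> f_prod k (perturb y v e) = (\<Prod>i<k. y ! i + e * v i)"
  by (simp add: f_prod_nth)

lemma eventually_pos_affine: "0 < c \<Longrightarrow> eventually (\<lambda>e::real. 0 < c + e * d) (at_right 0)"
proof -
  assume "0 < c"
  moreover have "((\<lambda>e::real. c + e * d) \<longlongrightarrow> c + 0 * d) (at_right 0)"
    by (intro tendsto_intros)
  ultimately show ?thesis using order_tendstoD(1) by fastforce
qed

lemma eventually_constraint_if_slack:
  assumes "(\<Prod>i<l. y ! i) < real g * (\<Sum>i\<in>{l..<n}. y ! i)"
  shows "eventually (\<lambda>e. (\<Prod>i<l. y ! i + e * v i) \<le> real g * (\<Sum>i\<in>{l..<n}. y ! i + e * v i))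
    (at_right 0)"
proof -
  let ?gap = "\<lambda>e. real g * (\<Sum>i\<in>{l..<n}. y ! i + e * v i) - (\<Prod>i<l. y ! i + e * v i)"
  have "(?gap \<longlongrightarrow> real g * (\<Sum>i\<in>{l..<n}. y ! i + 0 * v i) - (\<Prod>i<l. y ! i + 0 * v i)) (at_right 0)"
    by (intro tendsto_intros)
  from order_tendstoD(1)[OF this, of 0] assms
  have "eventually (\<lambda>e. 0 < ?gap e) (at_right 0)" by simp
  then show ?thesis by (rule eventually_mono) simp
qed

lemma constraint_perturb_if_unchanged:
  assumes "(\<Prod>i<l. y ! i) \<le> real g * (\<Sum>i\<in>{l..<n}. y ! i)"
    and "\<And>i. i < l \<Longrightarrow> v i = 0" and "(\<Sum>i\<in>{l..<n}. v i) = 0"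
  shows "(\<Prod>i<l. y ! i + e * v i) \<le> real g * (\<Sum>i\<in>{l..<n}. y ! i + e * v i)"
  using assms by (simp add: sum.distrib flip: sum_distrib_left)

lemma eventually_perturb_in_A_set:
  assumes y: "y \<in> A_set g n" and pos: "\<And>i. i < n \<Longrightarrow> 0 < y ! i" and v: "(\<Sum>i<n. v i) = 0"
    and ord: "\<And>i. Suc i < n \<Longrightarrow> y ! Suc i < y ! i \<or> v (Suc i) \<le> v i"
    and constraint: "\<And>l. 1 \<le> l \<Longrightarrow> l \<le> n - 1 \<Longrightarrow>
      eventually (\<lambda>e. (\<Prod>i<l. y ! i + e * v i) \<le> real g * (\<Sum>i\<in>{l..<n}. y ! i + e * v i)) (at_right 0)"
  shows "eventually (\<lambda>e. perturb y v e \<in> A_set g n) (at_right 0)"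
proof -
  have ord_ev: "eventually (\<lambda>e. y ! Suc i + e * v (Suc i) \<le> y ! i + e * v i) (at_right 0)"
    if "Suc i < n" for i
  proof (cases "y ! Suc i < y ! i")
    case True
    then show ?thesis
      using eventually_pos_affine[of "y ! i - y ! Suc i" "v i - v (Suc i)"]
      by (auto elim: eventually_mono simp: algebra_simps)
  next
    case False
    then have "v (Suc i) \<le> v i" "y ! Suc i \<le> y ! i" using ord A_setD(2)[OF y] that by auto
    show ?thesis
    proof (rule eventually_mono[OF eventually_at_right_less[of "0 :: real"]])
      fix e :: real
      assume "0 < e"
      then show "y ! Suc i + e * v (Suc i) \<le> y ! i + e * v i"
        using \<open>v (Suc i) \<le> v i\<close> \<open>y ! Suc i \<le> y ! i\<close> by (intro add_mono mult_left_mono) auto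
    qed
  qed
  have "eventually (\<lambda>e. (\<forall>i\<in>{i. Suc i < n}. y ! Suc i + e * v (Suc i) \<le> y ! i + e * v i)
      \<and> (\<forall>i\<in>{..<n}. 0 < y ! i + e * v i)
      \<and> (\<forall>l\<in>{l. 1 \<le> l \<and> l \<le> n - 1}.
           (\<Prod>i<l. y ! i + e * v i) \<le> real g * (\<Sum>i\<in>{l..<n}. y ! i + e * v i))) (at_right 0)"
    using ord_ev pos constraint eventually_pos_affine
    by (intro eventually_conj eventually_ball_finite) (auto intro: finite_subset[of _ "{..<n}"])
  then show ?thesis
  proof (rule eventually_mono)
    fix e
    assume H: "(\<forall>i\<in>{i. Suc i < n}. y ! Suc i + e * v (Suc i) \<le> y ! i + e * v i)
      \<and> (\<forall>i\<in>{..<n}. 0 < y ! i + e * v i)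
      \<and> (\<forall>l\<in>{l. 1 \<le> l \<and> l \<le> n - 1}.
           (\<Prod>i<l. y ! i + e * v i) \<le> real g * (\<Sum>i\<in>{l..<n}. y ! i + e * v i))"
    have len: "length y = n" using A_setD(1)[OF y] .
    have "(\<Sum>i<n. y ! i + e * v i) = 1 / real g"
      using A_setD(4)[OF y] v by (simp add: sum.distrib flip: sum_distrib_left)
    moreover have "(\<Prod>i<l. perturb y v e ! i) = (\<Prod>i<l. y ! i + e * v i)" if "l \<le> n" for l
      using that len by (intro prod.cong) auto
    moreover have "(\<Sum>i\<in>{l..<n}. perturb y v e ! i) = (\<Sum>i\<in>{l..<n}. y ! i + e * v i)" for l
      using len by (intro sum.cong) auto
    ultimately show "perturb y v e \<in> A_set g n"
      unfolding A_set_iff using H len by (auto simp: less_imp_le)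
  qed
qed

lemma prod_transfer_less:
  fixes x :: "nat \<Rightarrow> real"
  assumes "p < q" "q < l" "x q \<le> x p" "0 < e" "\<And>i. i < l \<Longrightarrow> 0 < x i"
  shows "(\<Prod>i<l. x i + e * ((if i = p then 1 else 0) - (if i = q then 1 else 0))) < (\<Prod>i<l. x i)"
proof -
  let ?R = "\<Prod>i\<in>{..<l} - {p} - {q}. x i"
  have split: "(\<Prod>i<l. f i) = f p * f q * (\<Prod>i\<in>{..<l} - {p} - {q}. f i)" for f :: "nat \<Rightarrow> real"
    using assms(1,2) prod.remove[of "{..<l}" p f] prod.remove[of "{..<l} - {p}" q f]
    by (simp add: mult.assoc)
  have "e * x q \<le> e * x p" "0 < e * e" using assms(3,4) by simp_all
  moreover have "(x p + e) * (x q - e) = x p * x q + e * x q - e * x p - e * e"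
    by (simp add: algebra_simps)
  ultimately have "(x p + e) * (x q - e) < x p * x q" by linarith
  moreover have "0 < ?R" using assms(5) by (intro prod_pos) auto
  moreover have "(\<Prod>i\<in>{..<l} - {p} - {q}. x i + e * ((if i = p then 1 else 0) - (if i = q then 1 else 0))) = ?R"
    by (intro prod.cong) auto
  ultimately show ?thesis using assms(1) by (simp add: split[of x] split[of "\<lambda>i. x i + _ i"])
qed

lemma prod_plus_minus_less:
  fixes x w :: "nat \<Rightarrow> real"
  assumes "p < k" "w p \<noteq> 0" and pos: "\<And>i. i < k \<Longrightarrow> 0 < x i"
    and nonneg: "\<And>i. i < k \<Longrightarrow> 0 \<le> x i + w i" "\<And>i. i < k \<Longrightarrow> 0 \<le> x i - w i"
  shows "(\<Prod>i<k. x i + w i) * (\<Prod>i<k. x i - w i) < (\<Prod>i<k. x i) * (\<Prod>i<k. x i)"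
proof -
  have square: "(x i + w i) * (x i - w i) = x i * x i - w i * w i" for i
    by (simp add: algebra_simps)
  have "(\<Prod>i<k. (x i + w i) * (x i - w i)) < (\<Prod>i<k. x i * x i)"
  proof (rule prod_mono_strict[of p])
    have "0 < w p * w p" using assms(2) not_real_square_gt_zero by blast
    then show "(x p + w p) * (x p - w p) < x p * x p" unfolding square by simp
    show "0 \<le> (x i + w i) * (x i - w i) \<and> (x i + w i) * (x i - w i) \<le> x i * x i"
      if "i \<in> {..<k}" for i
    proof
      show "0 \<le> (x i + w i) * (x i - w i)" using nonneg that by (intro mult_nonneg_nonneg) auto
      show "(x i + w i) * (x i - w i) \<le> x i * x i" unfolding square by simp
    qed
  qed (use assms in auto)
  then show ?thesis by (simp add: prod.distrib)
qed

section \<open>Minimizers\<close>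

locale f_prod_minimizer =
  fixes g n k :: nat and y :: "real list"
  assumes g: "g \<ge> 1" and n: "n \<ge> 3" and k: "1 \<le> k" "k \<le> n"
    and y: "y \<in> A_set g n"
    and minimal: "\<And>x. x \<in> A_set g n \<Longrightarrow> f_prod k y \<le> f_prod k x"
begin

lemma length_y: "length y = n"
  using A_setD(1)[OF y] .

lemma y_pos: "i < n \<Longrightarrow> 0 < y ! i"
  using A_set_nth_pos[OF y g] .

lemma no_descent:
  assumes "eventually (\<lambda>e. perturb y v e \<in> A_set g n \<and> f_prod k (perturb y v e) < f_prod k y) (at_right 0)"
  shows False
proof -
  obtain e where "perturb y v e \<in> A_set g n" "f_prod k (perturb y v e) < f_prod k y"
    using eventually_happens'[OF _ assms] by auto
  then show False using minimal by fastforce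
qed

lemma eventually_perturb_pos: "eventually (\<lambda>e. \<forall>i\<in>{..<n}. 0 < y ! i + e * v i) (at_right 0)"
  by (rule eventually_ball_finite) (use y_pos eventually_pos_affine in auto)

text \<open>Moving mass \<open>e\<close> from \<open>y_q\<close> to \<open>y_p\<close> keeps the order because \<open>p\<close> starts and \<open>q\<close> ends a run
  of equal entries; it leaves the constraints \<open>l \<le> p\<close> unchanged, keeps those in \<open>(p, q]\<close> by
  slackness and those beyond \<open>q\<close> because the product only drops, and it lowers \<open>f_k\<close>.\<close>

lemma no_slack_run:
  assumes pq: "p < q" "q < k"
    and run_start: "p = 0 \<or> y ! p < y ! (p - 1)" and run_end: "Suc q = n \<or> y ! Suc q < y ! q"
    and slack: "\<And>l. p < l \<Longrightarrow> l \<le> q \<Longrightarrow> \<not> tight y g n l"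
  shows False
proof -
  define v where "v i = (if i = p then 1 else 0) - (if i = q then 1 else (0::real))" for i
  have q: "q < n" using pq k by simp
  have transfer: "(\<Prod>i<l. y ! i + e * v i) < (\<Prod>i<l. y ! i)" if "q < l" "l \<le> n" "0 < e" for l e
    unfolding v_def using prod_transfer_less[of p q l "(!) y" e] pq that A_setD(2)[OF y] y_pos by simp
  have v_sum: "(\<Sum>i\<in>{l..<n}. v i) = 0" if "l \<le> p \<or> q < l" for l
    using that pq q by (auto simp: v_def sum_subtractf)
  have ord: "y ! Suc i < y ! i \<or> v (Suc i) \<le> v i" if "Suc i < n" for i
    using run_start run_end that pq by (auto simp: v_def)
  have constraint: "eventually (\<lambda>e. (\<Prod>i<l. y ! i + e * v i) \<le> real g * (\<Sum>i\<in>{l..<n}. y ! i + e * v i))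
      (at_right 0)" if l: "1 \<le> l" "l \<le> n - 1" for l
  proof -
    consider "l \<le> p" | "p < l" "l \<le> q" | "q < l" by linarith
    then show ?thesis
    proof cases
      case 1
      then show ?thesis
        using A_setD(5)[OF y l] v_sum pq
        by (intro always_eventually allI constraint_perturb_if_unchanged) (auto simp: v_def)
    next
      case 2
      then show ?thesis
        using slack slack_if_not_tight[OF y l] by (intro eventually_constraint_if_slack) auto
    next
      case 3
      show ?thesis
      proof (rule eventually_mono[OF eventually_at_right_less[of "0 :: real"]])
        fix e :: real
        assume "0 < e"
        then have "(\<Prod>i<l. y ! i + e * v i) < (\<Prod>i<l. y ! i)" using transfer[of l e] 3 l by simp
        then have "(\<Prod>i<l. y ! i + e * v i) \<le> real g * (\<Sum>i\<in>{l..<n}. y ! i)"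
          using A_setD(5)[OF y l] by linarith
        then show "(\<Prod>i<l. y ! i + e * v i) \<le> real g * (\<Sum>i\<in>{l..<n}. y ! i + e * v i)"
          using v_sum[of l] 3 by (simp add: sum.distrib flip: sum_distrib_left)
      qed
    qed
  qed
  have "(\<Sum>i<n. v i) = 0" using v_sum[of 0] by (simp add: atLeast0LessThan)
  then have "eventually (\<lambda>e. perturb y v e \<in> A_set g n) (at_right 0)"
    using eventually_perturb_in_A_set[OF y y_pos] ord constraint by blast
  moreover have "eventually (\<lambda>e. f_prod k (perturb y v e) < f_prod k y) (at_right 0)"
    using eventually_at_right_less[of "0 :: real"]
    by (rule eventually_mono) (use transfer pq k in \<open>simp add: f_prod_perturb f_prod_nth length_y\<close>)
  ultimately show False using no_descent eventually_conj by blast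
qed

text \<open>Otherwise lower the first \<open>n - 1\<close> entries by \<open>e\<close> and raise the last one by \<open>(n - 1) e\<close>:
  every product drops, every tail sum grows, and \<open>f_k\<close> strictly decreases.\<close>

lemma last_entries_eq:
  assumes "k < n"
  shows "y ! (n - 1) = y ! (n - 2)"
proof (rule ccontr)
  assume "y ! (n - 1) \<noteq> y ! (n - 2)"
  then have last: "y ! (n - 1) < y ! (n - 2)"
    using A_setD(2)[OF y, of "n - 2" "n - 1"] n by fastforce
  define v where "v i = (if i = n - 1 then real (n - 1) else - 1)" for i
  have v_nonpos: "v i \<le> 0" if "i < n - 1" for i using that by (simp add: v_def)
  have v_sum: "(\<Sum>i<n. v i) = 0"
  proof -
    have "{..<n} = insert (n - 1) {..<n - 1}" using n by auto
    then show ?thesis using n by (simp add: v_def of_nat_diff)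
  qed
  have ord: "y ! Suc i < y ! i \<or> v (Suc i) \<le> v i" if "Suc i < n" for i
  proof (cases "i = n - 2")
    case True
    then show ?thesis using last n by (simp add: Suc_diff_Suc numeral_2_eq_2)
  qed (use that in \<open>auto simp: v_def\<close>)
  have decrease: "(\<Prod>i<l. y ! i + e * v i) \<le> (\<Prod>i<l. y ! i)"
    if "l \<le> n - 1" "\<forall>i\<in>{..<n}. 0 < y ! i + e * v i" "0 < e" for l e
    using that v_nonpos by (intro prod_mono) (auto simp: mult_nonneg_nonpos less_imp_le)
  have constraint: "eventually (\<lambda>e. (\<Prod>i<l. y ! i + e * v i) \<le> real g * (\<Sum>i\<in>{l..<n}. y ! i + e * v i))
      (at_right 0)" if l: "1 \<le> l" "l \<le> n - 1" for l
  proof (rule eventually_mono[OF eventually_conj[OF eventually_perturb_pos eventually_at_right_less]])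
    fix e :: real
    assume e: "(\<forall>i\<in>{..<n}. 0 < y ! i + e * v i) \<and> 0 < e"
    have "(\<Sum>i<l. v i) + (\<Sum>i\<in>{l..<n}. v i) = 0"
      using v_sum sum.atLeastLessThan_concat[of 0 l n v] l by (simp add: atLeast0LessThan)
    moreover have "(\<Sum>i<l. v i) \<le> 0" using v_nonpos l by (intro sum_nonpos) auto
    ultimately have "(\<Sum>i\<in>{l..<n}. v i) \<ge> 0" by linarith
    then have "(\<Sum>i\<in>{l..<n}. y ! i) \<le> (\<Sum>i\<in>{l..<n}. y ! i + e * v i)"
      using e by (simp add: sum.distrib flip: sum_distrib_left)
    then have "real g * (\<Sum>i\<in>{l..<n}. y ! i) \<le> real g * (\<Sum>i\<in>{l..<n}. y ! i + e * v i)"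
      by (intro mult_left_mono) auto
    then show "(\<Prod>i<l. y ! i + e * v i) \<le> real g * (\<Sum>i\<in>{l..<n}. y ! i + e * v i)"
      using decrease[of l e] e A_setD(5)[OF y l] l by linarith
  qed
  have "eventually (\<lambda>e. perturb y v e \<in> A_set g n) (at_right 0)"
    using eventually_perturb_in_A_set[OF y y_pos v_sum] ord constraint by blast
  moreover have "eventually (\<lambda>e. f_prod k (perturb y v e) < f_prod k y) (at_right 0)"
  proof (rule eventually_mono[OF eventually_conj[OF eventually_perturb_pos eventually_at_right_less]])
    fix e :: real
    assume e: "(\<forall>i\<in>{..<n}. 0 < y ! i + e * v i) \<and> 0 < e"
    have "(\<Prod>i<k. y ! i + e * v i) < (\<Prod>i<k. y ! i)"
      using e k assms v_nonpos
      by (intro prod_mono_strict[of 0]) (auto simp: v_def mult_nonneg_nonpos less_imp_le y_pos)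
    then show "f_prod k (perturb y v e) < f_prod k y"
      using k by (simp add: f_prod_perturb f_prod_nth length_y)
  qed
  ultimately show False using no_descent eventually_conj by blast
qed

text \<open>Otherwise both \<open>y + e v\<close> and \<open>y - e v\<close>, where \<open>v\<close> has weight \<open>n - p - 1\<close> at \<open>p\<close> and \<open>-1\<close> at
  every index after \<open>p\<close>, stay in \<open>A\<^sub>g\<^sup>n\<close> for small \<open>e\<close>; the product of their \<open>f_k\<close>-values is
  \<open>\<Prod>\<^sub>i\<^sub><\<^sub>k (y\<^sub>i\<^sup>2 - e\<^sup>2 v\<^sub>i\<^sup>2) < f_k(y)\<^sup>2\<close>, so one of them beats \<open>y\<close>.\<close>

lemma eq_next_if_slack_tail:
  assumes p: "p < k" "Suc p < n" and run_start: "p = 0 \<or> y ! p < y ! (p - 1)"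
    and slack: "\<And>l. p < l \<Longrightarrow> l \<le> n - 1 \<Longrightarrow> \<not> tight y g n l"
  shows "y ! Suc p = y ! p"
proof (rule ccontr)
  assume "y ! Suc p \<noteq> y ! p"
  then have step: "y ! Suc p < y ! p" using A_setD(2)[OF y, of p "Suc p"] p by fastforce
  define v where "v i = (if i = p then real (n - Suc p) else 0) - (if p < i then 1 else (0::real))" for i
  have "(\<Sum>i<n. if p < i then 1 else (0::real)) = real (card {p<..<n})"
    by (simp add: sum.If_cases lessThan_def greaterThanLessThan_def Int_def conj_commute)
  then have v_sum: "(\<Sum>i<n. v i) = 0" using p by (simp add: v_def sum_subtractf)
  have in_A: "eventually (\<lambda>e. perturb y u e \<in> A_set g n) (at_right 0)"
    if u: "u = v \<or> u = (\<lambda>i. - v i)" for u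
  proof (rule eventually_perturb_in_A_set[OF y y_pos])
    show "(\<Sum>i<n. u i) = 0" using u v_sum by (auto simp: sum_negf)
    show "y ! Suc i < y ! i \<or> u (Suc i) \<le> u i" if "Suc i < n" for i
      using u run_start step by (cases "Suc i = p \<or> i = p") (auto simp: v_def less_Suc_eq)
    show "eventually (\<lambda>e. (\<Prod>i<l. y ! i + e * u i) \<le> real g * (\<Sum>i\<in>{l..<n}. y ! i + e * u i))
        (at_right 0)" if l: "1 \<le> l" "l \<le> n - 1" for l
    proof (cases "l \<le> p")
      case True
      have "(\<Sum>i<l. u i) + (\<Sum>i\<in>{l..<n}. u i) = (\<Sum>i<n. u i)"
        using sum.atLeastLessThan_concat[of 0 l n u] l by (simp add: atLeast0LessThan)
      moreover have "u i = 0" if "i < l" for i using that True u by (auto simp: v_def)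
      ultimately show ?thesis
        using A_setD(5)[OF y l] u v_sum
        by (intro always_eventually allI constraint_perturb_if_unchanged) (auto simp: sum_negf)
    next
      case False
      then show ?thesis
        using l slack slack_if_not_tight[OF y l] by (intro eventually_constraint_if_slack) auto
    qed
  qed
  obtain e where e: "perturb y v e \<in> A_set g n" "perturb y (\<lambda>i. - v i) e \<in> A_set g n" "0 < e"
    using eventually_happens'[OF _ eventually_conj[OF in_A[of v] eventually_conj[OF in_A[of "\<lambda>i. - v i"]
      eventually_at_right_less[of "0 :: real"]]]] by auto
  have nonneg: "0 \<le> y ! i + e * v i" "0 \<le> y ! i - e * v i" if "i < k" for i
    using A_setD(3)[OF e(1), of i] A_setD(3)[OF e(2), of i] that k by (simp_all add: length_y)
  have "0 < v p" using p by (simp add: v_def)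
  then have "(\<Prod>i<k. y ! i + e * v i) * (\<Prod>i<k. y ! i - e * v i) < (\<Prod>i<k. y ! i) * (\<Prod>i<k. y ! i)"
    using e(3) p y_pos k nonneg by (intro prod_plus_minus_less) auto
  then have "f_prod k (perturb y v e) * f_prod k (perturb y (\<lambda>i. - v i) e) < f_prod k y * f_prod k y"
    using k by (simp add: f_prod_perturb f_prod_nth length_y)
  moreover have "0 \<le> f_prod k y"
    using k y_pos by (simp add: f_prod_nth length_y) (intro prod_nonneg, auto simp: less_imp_le)
  ultimately show False
    using minimal[OF e(1)] minimal[OF e(2)] mult_mono by (smt (verit))
qed

lemma not_all_tight:
  assumes "k < n" and "1 < real (n - k) * real (tsylv g k)"
  shows "\<exists>l. 1 \<le> l \<and> l \<le> k \<and> \<not> tight y g n l"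
proof (rule ccontr)
  assume "\<not> ?thesis"
  then have "f_prod k y = real g / real (tsylv g (Suc k))"
    using tight_prefix_sylv(1)[OF y g, of "Suc k" k] assms(1) by (simp add: f_prod_nth length_y)
  moreover have "f_prod k y \<le> real g / (real (n - k + 1) * real (tsylv g k) ^ 2)"
    using minimal[OF ypt_in_A_set[OF g k(1) k(2)]] f_prod_ypt[OF g k(1) order.refl k(2)]
    by (simp add: ydenom_diag)
  moreover have "real (tsylv g (Suc k)) < real (n - k + 1) * real (tsylv g k) ^ 2"
  proof -
    obtain k' where k': "k = Suc k'" using k(1) by (cases k) auto
    have "real (n - k + 1) * real (tsylv g k) = real (n - k) * real (tsylv g k) + real (tsylv g k)"
      by (simp add: algebra_simps)
    then have "real (tsylv g k) * (real (tsylv g k) + 1) < real (tsylv g k) * (real (n - k + 1) * real (tsylv g k))"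
      using assms(2) tsylv_pos[OF g k(1)] k by (intro mult_strict_left_mono) (auto simp: of_nat_diff)
    then show ?thesis using tsylv_Suc_Suc[of g k'] k' by (simp add: power2_eq_square mult_ac)
  qed
  moreover have "0 < real (tsylv g (Suc k))" using tsylv_pos[OF g] by simp
  ultimately show False
    using divide_strict_left_mono[of "real (tsylv g (Suc k))" "real (n - k + 1) * real (tsylv g k) ^ 2" "real g"] g
    by simp
qed

lemma run_start_after_tight:
  assumes "1 \<le> j" "j \<le> n - 1" and "\<And>l. 1 \<le> l \<Longrightarrow> l < j \<Longrightarrow> tight y g n l"
  shows "j - 1 = 0 \<or> y ! (j - 1) < y ! (j - 1 - 1)"
proof (cases "j = 1")
  case False
  then show ?thesis using tight_imp_descent[OF y g n, of "j - 1"] assms by simp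
qed simp

lemma slack_after_first_slack:
  assumes j: "1 \<le> j" "j \<le> k" "j \<le> n - 1"
    and tight_before: "\<And>l. 1 \<le> l \<Longrightarrow> l < j \<Longrightarrow> tight y g n l" and slack_j: "\<not> tight y g n j"
  shows "\<And>l. j \<le> l \<Longrightarrow> l \<le> k \<Longrightarrow> l \<le> n - 1 \<Longrightarrow> \<not> tight y g n l" and "k < n"
proof -
  note run_start = run_start_after_tight[OF j(1,3) tight_before]
  show slack: "\<not> tight y g n l" if l: "j \<le> l" "l \<le> k" "l \<le> n - 1" for l
  proof
    assume "tight y g n l"
    then have "j < l" using l slack_j by (cases "l = j") auto
    then obtain m where m: "j < m" "m \<le> k" "m \<le> n - 1" "tight y g n m"
      and first: "\<forall>i<m. \<not> (j < i \<and> i \<le> k \<and> i \<le> n - 1 \<and> tight y g n i)"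
      using exists_least_iff[of "\<lambda>m. j < m \<and> m \<le> k \<and> m \<le> n - 1 \<and> tight y g n m"] l \<open>tight y g n l\<close>
      by blast
    show False
    proof (rule no_slack_run[of "j - 1" "m - 1"])
      show "j - 1 < m - 1" "m - 1 < k" using m j by auto
      show "Suc (m - 1) = n \<or> y ! Suc (m - 1) < y ! (m - 1)"
        using tight_imp_descent[OF y g n _ m(3,4)] m(1) by simp
      show "\<not> tight y g n i" if "j - 1 < i" "i \<le> m - 1" for i
        using that first slack_j m by (cases "i = j") auto
    qed (rule run_start)
  qed
  show "k < n"
  proof (rule ccontr)
    assume "\<not> k < n"
    show False
    proof (rule no_slack_run[of "j - 1" "n - 1"])
      show "j - 1 < n - 1" "n - 1 < k" "Suc (n - 1) = n \<or> y ! Suc (n - 1) < y ! (n - 1)"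
        using j n \<open>\<not> k < n\<close> by auto
      show "\<not> tight y g n i" if "j - 1 < i" "i \<le> n - 1" for i
        using slack that j \<open>\<not> k < n\<close> by simp
    qed (rule run_start)
  qed
qed

lemma constant_after_first_slack:
  assumes near_top: "n \<le> k + 2" and j: "1 \<le> j" "j \<le> k" "j \<le> n - 1"
    and tight_before: "\<And>l. 1 \<le> l \<Longrightarrow> l < j \<Longrightarrow> tight y g n l" and slack_j: "\<not> tight y g n j"
    and i: "j - 1 \<le> i" "i < n"
  shows "y ! i = y ! (j - 1)"
proof -
  note slack = slack_after_first_slack(1)[OF j tight_before slack_j]
  have kn: "k < n" using slack_after_first_slack(2)[OF j tight_before slack_j] .
  note run_start = run_start_after_tight[OF j(1,3) tight_before]
  have run_continues: "y ! Suc q = y ! q" if q: "j \<le> q" "q < k" for q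
  proof (rule ccontr)
    assume "y ! Suc q \<noteq> y ! q"
    then have "y ! Suc q < y ! q" using A_setD(2)[OF y, of q "Suc q"] q kn by fastforce
    show False
    proof (rule no_slack_run[of "j - 1" q])
      show "j - 1 < q" "q < k" using q j by auto
      show "Suc q = n \<or> y ! Suc q < y ! q" using \<open>y ! Suc q < y ! q\<close> by simp
      show "\<not> tight y g n l" if "j - 1 < l" "l \<le> q" for l using slack that q kn by simp
    qed (rule run_start)
  qed
  have block: "y ! i = y ! j" if "j \<le> i" "i \<le> k" for i
    using that
  proof (induction i rule: dec_induct)
    case (step i)
    then show ?case using run_continues[of i] by simp
  qed simp
  have tail: "y ! i = y ! j" if "j \<le> i" "i < n" for i
  proof (cases "i \<le> k")
    case False
    then have "i = n - 1" "k = n - 2" using that near_top kn by auto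
    then show ?thesis using last_entries_eq[OF kn] block[of "n - 2"] j by simp
  next
    case True
    then show ?thesis using that by (intro block)
  qed
  have slack_tail: "\<not> tight y g n l" if l: "j \<le> l" "l \<le> n - 1" for l
  proof (cases "l \<le> k")
    case False
    then have "l = n - 1" "j \<le> l - 1" using l near_top kn j by auto
    then show ?thesis using tight_imp_descent[OF y g n, of l] tail[of l] tail[of "l - 1"] j n by auto
  qed (use slack l in simp)
  have "y ! Suc (j - 1) = y ! (j - 1)"
    using eq_next_if_slack_tail[of "j - 1"] run_start slack_tail j kn by simp
  then show ?thesis using tail[of i] i j by (cases "i = j - 1") auto
qed

lemma minimizer_eq_ypt:
  assumes near_top: "n \<le> k + 2"
  obtains J where "1 \<le> J" "J \<le> k" "k = n \<Longrightarrow> J = n" "y = ypt g n J"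
proof (cases "\<exists>l. 1 \<le> l \<and> l \<le> k \<and> l \<le> n - 1 \<and> \<not> tight y g n l")
  case True
  then obtain j where j: "1 \<le> j" "j \<le> k" "j \<le> n - 1" "\<not> tight y g n j"
    and first: "\<forall>l<j. \<not> (1 \<le> l \<and> l \<le> k \<and> l \<le> n - 1 \<and> \<not> tight y g n l)"
    using exists_least_iff[of "\<lambda>l. 1 \<le> l \<and> l \<le> k \<and> l \<le> n - 1 \<and> \<not> tight y g n l"] by blast
  have tight_before: "tight y g n l" if "1 \<le> l" "l < j" for l using first that j by auto
  have "k < n" using slack_after_first_slack(2)[OF j(1-3) tight_before j(4)] .
  moreover have "y = ypt g n j"
    using j(3) by (intro eq_ypt_if_tight_prefix[OF y g j(1) _ tight_before
      constant_after_first_slack[OF near_top j(1-3) tight_before j(4)]]) simp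
  ultimately show ?thesis using that j by simp
next
  case False
  show ?thesis
  proof (cases "k = n")
    case True
    have "y = ypt g n n"
    proof (rule eq_ypt_if_tight_prefix[OF y g])
      show "tight y g n l" if "1 \<le> l" "l < n" for l using False True that by auto
      show "y ! i = y ! (n - 1)" if "n - 1 \<le> i" "i < n" for i
      proof -
        have "i = n - 1" using that by linarith
        then show ?thesis by simp
      qed
    qed (use n in simp_all)
    then show ?thesis using that True n by simp
  next
    case False
    then have "k < n" using k by simp
    moreover have "1 < real (n - k) * real (tsylv g k)"
    proof (cases "n = k + 1")
      case True
      then have "k \<ge> 2" using n by simp
      then show ?thesis using tsylv_ge_2[OF g, of k] True by simp
    next
      case False
      then have "n - k = 2" using near_top \<open>k < n\<close> by simp
      then show ?thesis using tsylv_ge_1[OF g k(1)] by simp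
    qed
    ultimately show ?thesis using not_all_tight \<open>\<not> (\<exists>l. _)\<close> by auto
  qed
qed

lemma ydenom_le_of_minimizer:
  assumes y_eq: "y = ypt g n J0" and J0: "1 \<le> J0" "J0 \<le> k" and J: "1 \<le> J" "J \<le> k"
  shows "ydenom g n k J \<le> ydenom g n k J0"
proof (rule ccontr)
  assume "\<not> ?thesis"
  then have "real g / ydenom g n k J < real g / ydenom g n k J0"
    using ydenom_pos[OF g] J J0 g by (intro divide_strict_left_mono) auto
  moreover have "f_prod k y \<le> f_prod k (ypt g n J)"
    using minimal ypt_in_A_set[OF g J(1)] J k by simp
  ultimately show False using f_prod_ypt[OF g] y_eq J J0 k by simp
qed

lemma minimizer_last_two:
  assumes "k < n" "n \<le> k + 2" "2 \<le> k"
  shows "y = ypt g n k \<and> n - k + 1 \<le> tsylv g (k - 1)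
    \<or> y = ypt g n (k - 1) \<and> tsylv g (k - 1) \<le> n - k + 1"
proof -
  obtain J0 where J0: "1 \<le> J0" "J0 \<le> k" "y = ypt g n J0"
    using minimizer_eq_ypt[OF assms(2)] by metis
  have "J0 = k - 1 \<and> ydenom g n k k \<le> ydenom g n k (k - 1)
      \<or> J0 = k \<and> ydenom g n k (k - 1) \<le> ydenom g n k k"
  proof (rule argmax_after_strict_increase[OF _ J0(1,2) _ assms(3)])
    show "ydenom g n k J < ydenom g n k (Suc J)" if "1 \<le> J" "Suc J < k" for J
      using ydenom_less_Suc[OF g, of J k n] that assms by simp
    show "ydenom g n k J \<le> ydenom g n k J0" if "1 \<le> J" "J \<le> k" for J
      using ydenom_le_of_minimizer[OF J0(3) J0(1,2) that] .
  qed
  then show ?thesis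
    using ydenom_last_step[OF g assms(3) k(2)] J0(3) by fastforce
qed

lemma minimizer_k_eq_n:
  assumes "k = n"
  shows "f_prod n y = real g / (real (tsylv g n))^2 \<and> y = ypt g n n"
proof -
  obtain J where "J = n" "y = ypt g n J"
    using minimizer_eq_ypt assms by (metis le_add1)
  then show ?thesis using f_prod_ypt[OF g, of n n n] ydenom_diag n assms by simp
qed

lemma minimizer_k_eq_n_minus_1:
  assumes k_eq: "k = n - 1"
  shows "((n = 3 \<and> g = 1) \<longrightarrow> f_prod 2 y = 1/9 \<and> y = ypt 1 3 1)
       \<and> (\<not> (n = 3 \<and> g = 1) \<longrightarrow>
            f_prod (n - 1) y = real g / (2 * (real (tsylv g (n - 1)))^2)
          \<and> y \<in> {ypt 2 3 1, ypt 1 4 2, ypt g n (n - 1)})"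
proof -
  have kn: "k < n" "n \<le> k + 2" "2 \<le> k" "n - k + 1 = 2" using n k_eq by auto
  have k1: "1 \<le> k - 1" using kn by simp
  have t1: "1 \<le> tsylv g (k - 1)" using tsylv_ge_1[OF g k1] by simp
  have value_last: "f_prod k (ypt g n k) = real g / (2 * (real (tsylv g (n - 1)))^2)"
    using f_prod_ypt[OF g k(1) order.refl k(2)] ydenom_diag kn k_eq by simp
  consider "y = ypt g n k" "2 \<le> tsylv g (k - 1)" | "y = ypt g n (k - 1)" "tsylv g (k - 1) = 1"
    | "y = ypt g n (k - 1)" "tsylv g (k - 1) = 2"
    using minimizer_last_two[OF kn(1-3)] kn(4) t1 by fastforce
  then show ?thesis
  proof cases
    case 1
    then have "\<not> (n = 3 \<and> g = 1)" using k_eq by auto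
    then show ?thesis using 1 value_last k_eq by auto
  next
    case 2
    then have "n = 3" "g = 1" using tsylv_eq_1_iff[OF g k1] kn k_eq by auto
    then show ?thesis
      using 2 f_prod_ypt[OF g, of 1 2 3] k_eq by (simp add: ydenom_def)
  next
    case 3
    then have "n = 3 \<and> g = 2 \<or> n = 4 \<and> g = 1"
      using tsylv_eq_2_iff[OF g k1] kn k_eq by auto
    moreover have "f_prod k y = f_prod k (ypt g n k)"
      using 3 f_prod_ypt[OF g, of "k - 1" k n] f_prod_ypt[OF g k(1) order.refl k(2)]
        ydenom_last_step(2)[OF g kn(3) k(2)] kn by simp
    ultimately show ?thesis using 3 value_last k_eq by auto
  qed
qed

lemma minimizer_k_eq_n_minus_2:
  assumes k_eq: "k = n - 2"
  shows "((n = 4 \<and> g \<in> {1, 2}) \<longrightarrow> f_prod 2 y = 1 / (16 * (real g)^2) \<and> y = ypt g 4 1)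
       \<and> ((n = 5 \<and> g = 1) \<longrightarrow> f_prod 3 y = 1/128 \<and> y = ypt 1 5 2)
       \<and> (\<not> (n = 4 \<and> g \<in> {1, 2}) \<and> \<not> (n = 5 \<and> g = 1) \<longrightarrow>
            f_prod (n - 2) y = real g / (3 * (real (tsylv g (n - 2)))^2)
          \<and> y \<in> {ypt 3 4 1, ypt g n (n - 2)})"
proof -
  have value_last: "f_prod k (ypt g n k) = real g / (3 * (real (tsylv g (n - 2)))^2)"
    using f_prod_ypt[OF g k(1) order.refl k(2)] ydenom_diag n k_eq by simp
  show ?thesis
  proof (cases "n = 3")
    case True
    have "n \<le> k + 2" using k_eq by simp
    then obtain J where "1 \<le> J" "J \<le> k" "y = ypt g n J" using minimizer_eq_ypt by blast
    then show ?thesis using True value_last k_eq by simp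
  next
    case False
    then have kn: "k < n" "n \<le> k + 2" "2 \<le> k" "n - k + 1 = 3" using n k_eq by auto
    have k1: "1 \<le> k - 1" using kn by simp
    have exceptional: "(n = 4 \<and> g \<in> {1, 2}) \<or> (n = 5 \<and> g = 1) \<longleftrightarrow> tsylv g (k - 1) \<le> 2"
      using tsylv_le_2_iff[OF g k1] kn k_eq g by auto
    consider "y = ypt g n k" "3 \<le> tsylv g (k - 1)" | "y = ypt g n (k - 1)" "tsylv g (k - 1) \<le> 2"
      | "y = ypt g n (k - 1)" "tsylv g (k - 1) = 3"
      using minimizer_last_two[OF kn(1-3)] kn(4) by fastforce
    then show ?thesis
    proof cases
      case 1
      then show ?thesis using exceptional value_last k_eq by auto
    next
      case 2
      then have "(n = 4 \<and> g \<in> {1, 2}) \<or> (n = 5 \<and> g = 1)" using exceptional by simp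
      then show ?thesis
      proof
        assume n4: "n = 4 \<and> g \<in> {1, 2}"
        then have "f_prod 2 y = real g / (real g * (4 * real g) ^ 2)"
          using 2 f_prod_ypt[OF g, of 1 2 4] k_eq by (simp add: ydenom_def power2_eq_square)
        moreover have "real g / (real g * (4 * real g) ^ 2) = 1 / (16 * (real g)^2)"
          using g by (simp add: power_mult_distrib)
        ultimately show ?thesis using n4 2 k_eq by auto
      next
        assume n5: "n = 5 \<and> g = 1"
        then show ?thesis
          using 2 f_prod_ypt[OF g, of 2 3 5] k_eq tsylv_2[of 1] by (simp add: ydenom_def)
      qed
    next
      case 3
      then have "n = 4" "g = 3" using tsylv_eq_3_iff[OF g k1] kn k_eq by auto
      moreover have "f_prod k y = f_prod k (ypt g n k)"
        using 3 f_prod_ypt[OF g, of "k - 1" k n] f_prod_ypt[OF g k(1) order.refl k(2)]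
          ydenom_last_step(2)[OF g kn(3) k(2)] kn by simp
      ultimately show ?thesis using 3 value_last k_eq by auto
    qed
  qed
qed

end

theorem proposition3p10:
  fixes g n k :: nat and y :: "real list"
  assumes "g \<ge> 1" and "n \<ge> 3" and "1 \<le> k" and "k \<le> n"
    and "y \<in> A_set g n"
    and "\<forall>x\<in>A_set g n. f_prod k y \<le> f_prod k x"
  shows "(k = n \<longrightarrow>
            f_prod n y = real g / (real (tsylv g n))^2 \<and> y = ypt g n n)
       \<and> (k = n - 1 \<longrightarrow>
            ((n = 3 \<and> g = 1) \<longrightarrow> f_prod 2 y = 1/9 \<and> y = ypt 1 3 1)
          \<and> (\<not> (n = 3 \<and> g = 1) \<longrightarrow>
               f_prod (n - 1) y = real g / (2 * (real (tsylv g (n - 1)))^2)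
             \<and> y \<in> {ypt 2 3 1, ypt 1 4 2, ypt g n (n - 1)}))
       \<and> (k = n - 2 \<longrightarrow>
            ((n = 4 \<and> g \<in> {1, 2}) \<longrightarrow> f_prod 2 y = 1 / (16 * (real g)^2) \<and> y = ypt g 4 1)
          \<and> ((n = 5 \<and> g = 1) \<longrightarrow> f_prod 3 y = 1/128 \<and> y = ypt 1 5 2)
          \<and> (\<not> (n = 4 \<and> g \<in> {1, 2}) \<and> \<not> (n = 5 \<and> g = 1) \<longrightarrow>
               f_prod (n - 2) y = real g / (3 * (real (tsylv g (n - 2)))^2)
             \<and> y \<in> {ypt 3 4 1, ypt g n (n - 2)}))"
proof -
  interpret f_prod_minimizer g n k y
    using assms by unfold_locales auto
  show ?thesis
    using minimizer_k_eq_n minimizer_k_eq_n_minus_1 minimizer_k_eq_n_minus_2 by blast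
qed

end
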